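(* Let $n$ be a positive even integer and let $\pi$ be chosen uniformly at random from the permutations of $[n]$ all of whose cycle lengths are even. For a positive integer $k\le n$, let $Y_k$ be the number of elements of $[n]$ lying in $k$-cycles of $\pi$. Then \[ \mathbb{E}_e^{(n)}Y_k=\frac{n(n-2)\cdots(n-k+2)}{(n-1)(n-3)\cdots(n-k+1)} \] if $k$ is even, and $\mathbb{E}_e^{(n)}Y_k=0$ if $k$ is odd.
   Context: $\mathbb{E}_e^{(n)}$ denotes expectation under the uniform measure on permutations of $[n]$ with all cycle lengths even. $Y_k=kX_k$, where $X_k$ is the number of $k$-cycles. *)

theory Defs
  imports "HOL-Combinatorics.Combinatorics" Complex_Main
begin

definition cycle_len :: "(nat \<Rightarrow> nat) \<Rightarrow> nat \<Rightarrow> nat" where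
  "cycle_len p x = card (orbit p x)"

definition even_cycle_perms :: "nat \<Rightarrow> (nat \<Rightarrow> nat) set" where
  "even_cycle_perms n = {p. p permutes {1..n} \<and> (\<forall>x\<in>{1..n}. even (cycle_len p x))}"

definition Y :: "nat \<Rightarrow> nat \<Rightarrow> (nat \<Rightarrow> nat) \<Rightarrow> nat" where
  "Y n k p = card {x\<in>{1..n}. cycle_len p x = k}"

definition EY_even :: "nat \<Rightarrow> nat \<Rightarrow> real" where
  "EY_even n k = (\<Sum>p\<in>even_cycle_perms n. real (Y n k p)) / real (card (even_cycle_perms n))"

end

theory Submission imports Defs begin

text \<open>Count the permutations of an m-set with all cycles even by the length k of the cycle
  through a fixed point x: listing that cycle from x, it is determined by an ordered choice of
  its other k - 1 points, and what remains is an even-cycle permutation of the other m - k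
  points. This gives the recursion E(m) = sum over even k of (m-1)...(m-k+1) E(m-k), solved by
  E(m) = ((m-1)!!)^2 for even m. Summing over x, the expected value of Y_k is
  n (n-1)...(n-k+1) E(n-k) / E(n), and the double factorials telescope to the stated ratio.\<close>

lemma support_cong:
  assumes "\<And>i. (f ^^ i) x = (g ^^ i) x"
  shows "support f x = support g x"
  using assms by (simp add: least_power_def)

lemma orbit_eq_set_support:
  assumes "permutation p"
  shows "orbit p x = set (support p x)"
  using orbit_altdef_permutation[OF assms] support_set[OF assms] by auto

lemma cyclic_on_set_support:
  assumes "permutation p"
  shows "cyclic_on p (set (support p x))"
  using cyclic_on_orbit'[OF assms, of x] by (simp only: orbit_eq_set_support[OF assms])

lemma card_orbit_eq_length_support:
  assumes "permutation p"
  shows "card (orbit p x) = length (support p x)"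
  using orbit_eq_set_support[OF assms] cycle_of_permutation[OF assms] distinct_card by metis

lemma support_eq_Cons:
  assumes "permutation p"
  shows "support p x = x # tl (support p x)"
proof -
  have "[0..<least_power p x] = 0 # [1..<least_power p x]"
    using least_power_of_permutation(2)[OF assms] by (simp add: upt_rec)
  then show ?thesis by simp
qed

lemma funpow_cycle_of_list_hd:
  assumes "distinct cs" "cs \<noteq> []"
  shows "(cycle_of_list cs ^^ i) (hd cs) = cs ! (i mod length cs)"
proof -
  have "map (cycle_of_list cs ^^ i) cs = rotate i cs" using cyclic_rotation[OF assms(1)] .
  then have "(cycle_of_list cs ^^ i) (cs ! 0) = rotate i cs ! 0"
    by (metis assms(2) length_greater_0_conv nth_map)
  then show ?thesis using assms(2) by (simp add: nth_rotate hd_conv_nth)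
qed

lemma support_cycle_of_list:
  assumes "distinct cs" "cs \<noteq> []"
  shows "support (cycle_of_list cs) (hd cs) = cs"
proof -
  let ?c = "cycle_of_list cs" and ?L = "length cs"
  note iter = funpow_cycle_of_list_hd[OF assms]
  have back_iff: "(?c ^^ i) (hd cs) = hd cs \<longleftrightarrow> ?L dvd i" for i
    using iter nth_eq_iff_index_eq[OF assms(1)] assms(2)
    by (simp add: hd_conv_nth dvd_eq_mod_eq_0)
  have "least_power ?c (hd cs) = ?L"
    unfolding least_power_def
  proof (rule Least_equality)
    show "(?c ^^ ?L) (hd cs) = hd cs \<and> 0 < ?L" using back_iff assms(2) by simp
  qed (use back_iff in \<open>auto dest: dvd_imp_le\<close>)
  moreover have "map (\<lambda>i. cs ! (i mod ?L)) [0..<?L] = map ((!) cs) [0..<?L]"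
    by (rule map_cong) auto
  ultimately show ?thesis by (simp add: iter map_nth)
qed

lemma support_cycle_of_list_comp:
  assumes "distinct cs" "cs \<noteq> []" "q permutes T" "set cs \<inter> T = {}"
  shows "support (cycle_of_list cs \<circ> q) (hd cs) = cs"
proof -
  let ?c = "cycle_of_list cs"
  have "((?c \<circ> q) ^^ i) (hd cs) = (?c ^^ i) (hd cs) \<and> (?c ^^ i) (hd cs) \<in> set cs" for i
  proof (induction i)
    case (Suc i)
    then have "q ((?c ^^ i) (hd cs)) = (?c ^^ i) (hd cs)"
      using permutes_not_in[OF assms(3)] assms(4) by blast
    then show ?case
      using Suc by (auto simp: permutes_in_image[OF cycle_permutes])
  qed (use assms(2) in simp)
  then show ?thesis
    using support_cong support_cycle_of_list[OF assms(1,2)] by metis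
qed

definition even_cycle_perms_on :: "'a set \<Rightarrow> ('a \<Rightarrow> 'a) set" where
  "even_cycle_perms_on S = {p. p permutes S \<and> (\<forall>x\<in>S. even (card (orbit p x)))}"

lemma even_cycle_perms_eq_on: "even_cycle_perms n = even_cycle_perms_on {1..n}"
  unfolding even_cycle_perms_def even_cycle_perms_on_def cycle_len_def ..

lemma finite_even_cycle_perms_on: "finite S \<Longrightarrow> finite (even_cycle_perms_on S)"
  by (rule finite_subset[OF _ finite_permutations[of S]]) (auto simp: even_cycle_perms_on_def)

lemma perm_restrict_diff_cycle_in_even_cycle_perms_on:
  assumes p: "p \<in> even_cycle_perms_on S" and "finite S" and A: "cyclic_on p A"
  shows "perm_restrict p (S - A) \<in> even_cycle_perms_on (S - A)"
proof -
  have ps: "p permutes S" using p by (simp add: even_cycle_perms_on_def)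
  then have pp: "permutation p" using \<open>finite S\<close> permutation_permutes by blast
  have "orbit (perm_restrict p (S - A)) z = orbit p z" if z: "z \<in> S - A" for z
  proof (rule orbit_cong)
    show "z \<in> orbit p z" using permutation_self_in_orbit[OF pp] .
    fix s assume s: "s \<in> orbit p z"
    have "s \<notin> A"
    proof
      assume "s \<in> A"
      then have "orbit p z = A"
        using orbit_cyclic_eq3[OF A] orbit_cyclic_eq3[OF cyclic_on_orbit[OF ps \<open>finite S\<close>] s]
        by simp
      then show False using z permutation_self_in_orbit[OF pp, of z] by blast
    qed
    moreover have "s \<in> S" using permutes_orbit_subset[OF ps] z s by blast
    ultimately show "perm_restrict p (S - A) s = p s" by (simp add: perm_restrict_simps)
  qed
  then show ?thesis
    using p perm_restrict_diff_cyclic[OF ps A] by (simp add: even_cycle_perms_on_def)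
qed

lemma cycle_comp_in_even_cycle_perms_on:
  assumes q: "q \<in> even_cycle_perms_on T" and "finite T"
    and c: "c permutes A" and cA: "cyclic_on c A" and "even (card A)" and disj: "A \<inter> T = {}"
  shows "c \<circ> q \<in> even_cycle_perms_on (A \<union> T)"
proof -
  have qT: "q permutes T" using q by (simp add: even_cycle_perms_on_def)
  have "q permutes A \<union> T" "c permutes A \<union> T"
    using permutes_subset[OF qT] permutes_subset[OF c] by auto
  then have "c \<circ> q permutes A \<union> T" by (rule permutes_compose)
  moreover have "orbit (c \<circ> q) z = A" if "z \<in> A" for z
    using orbit_cyclic_eq3[OF permutes_comp_preserves_cyclic1[OF qT cA disj] that] by simp
  moreover have "orbit (c \<circ> q) z = orbit q z" if z: "z \<in> T" for z
  proof (rule orbit_cong)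
    have "permutation q" using qT \<open>finite T\<close> permutation_permutes by blast
    then show "z \<in> orbit q z" by (rule permutation_self_in_orbit)
    fix s assume "s \<in> orbit q z"
    then have "q s \<in> T" using permutes_orbit_subset[OF qT z] permutes_in_image[OF qT] by blast
    then show "(c \<circ> q) s = q s" using permutes_not_in[OF c] disj by auto
  qed
  ultimately show ?thesis
    using q \<open>even (card A)\<close> by (auto simp: even_cycle_perms_on_def)
qed

lemma cycle_comp_perm_restrict_diff:
  assumes p: "p permutes S" and A: "cyclic_on p A"
    and c: "c permutes A" and agree: "\<And>z. z \<in> A \<Longrightarrow> p z = c z"
  shows "c \<circ> perm_restrict p (S - A) = p"
proof
  fix z
  consider "z \<in> A" | "z \<in> S - A" | "z \<notin> S" "z \<notin> A" by blast
  then show "(c \<circ> perm_restrict p (S - A)) z = p z"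
  proof cases
    case 2
    then have "p z \<notin> A" using cyclic_on_f_in[OF p A] by blast
    then show ?thesis using 2 permutes_not_in[OF c] by (simp add: perm_restrict_simps)
  qed (use agree permutes_not_in[OF c] permutes_not_in[OF p]
       in \<open>auto simp: perm_restrict_simps\<close>)
qed

lemma perm_restrict_cycle_comp:
  assumes "c permutes A" "q permutes T" "A \<inter> T = {}"
  shows "perm_restrict (c \<circ> q) T = q"
proof
  fix z show "perm_restrict (c \<circ> q) T z = q z"
    using assms permutes_in_image[OF assms(2)] permutes_not_in[OF assms(1)] permutes_not_in[OF assms(2)]
    by (cases "z \<in> T") (auto simp: perm_restrict_simps)
qed

lemma card_even_cycle_perms_on_with_support:
  assumes "finite S" and cs: "distinct cs" "cs \<noteq> []" "set cs \<subseteq> S" "even (length cs)"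
  shows "card {p \<in> even_cycle_perms_on S. support p (hd cs) = cs}
           = card (even_cycle_perms_on (S - set cs))"
proof -
  let ?c = "cycle_of_list cs" and ?T = "S - set cs"
  let ?F = "{p \<in> even_cycle_perms_on S. support p (hd cs) = cs}"
  have c: "?c permutes set cs" by (rule cycle_permutes)
  have cycle: "cyclic_on p (set cs)" "\<And>z. z \<in> set cs \<Longrightarrow> p z = ?c z" if "p \<in> ?F" for p
  proof -
    have "p permutes S" and supp: "support p (hd cs) = cs"
      using that by (auto simp: even_cycle_perms_on_def)
    then have p: "permutation p" using \<open>finite S\<close> permutation_permutes by blast
    show "cyclic_on p (set cs)" using cyclic_on_set_support[OF p, of "hd cs"] by (simp only: supp)
    show "p z = ?c z" if "z \<in> set cs" for z
      using cycle_restrict[OF p, of z "hd cs"] supp that by simp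
  qed
  have "bij_betw (\<lambda>p. perm_restrict p ?T) ?F (even_cycle_perms_on ?T)"
  proof (rule bij_betw_byWitness[where f' = "\<lambda>q. ?c \<circ> q"])
    show "\<forall>p\<in>?F. ?c \<circ> perm_restrict p ?T = p"
    proof
      fix p assume p: "p \<in> ?F"
      then have "p permutes S" by (simp add: even_cycle_perms_on_def)
      then show "?c \<circ> perm_restrict p ?T = p"
        using cycle_comp_perm_restrict_diff[OF _ cycle(1)[OF p] c cycle(2)[OF p]] by blast
    qed
    show "\<forall>q\<in>even_cycle_perms_on ?T. perm_restrict (?c \<circ> q) ?T = q"
      using perm_restrict_cycle_comp[OF c] by (auto simp: even_cycle_perms_on_def)
    show "(\<lambda>p. perm_restrict p ?T) ` ?F \<subseteq> even_cycle_perms_on ?T"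
      using perm_restrict_diff_cycle_in_even_cycle_perms_on[OF _ \<open>finite S\<close> cycle(1)] by auto
    show "(\<lambda>q. ?c \<circ> q) ` even_cycle_perms_on ?T \<subseteq> ?F"
    proof (rule image_subsetI)
      fix q assume q: "q \<in> even_cycle_perms_on ?T"
      have "set cs \<union> ?T = S" using cs(3) by blast
      moreover have "cyclic_on ?c (set cs)"
        using cyclic_on_set_support[OF permutation_of_cycle, of cs "hd cs"]
        by (simp only: support_cycle_of_list[OF cs(1,2)])
      moreover have "even (card (set cs))" using distinct_card[OF cs(1)] cs(4) by simp
      moreover have "finite ?T" "set cs \<inter> ?T = {}" using \<open>finite S\<close> by auto
      ultimately have "?c \<circ> q \<in> even_cycle_perms_on S"
        using cycle_comp_in_even_cycle_perms_on[OF q _ c] by metis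
      moreover have "support (?c \<circ> q) (hd cs) = cs"
        using q support_cycle_of_list_comp[OF cs(1,2), of q ?T] by (simp add: even_cycle_perms_on_def)
      ultimately show "?c \<circ> q \<in> ?F" by simp
    qed
  qed
  then show ?thesis by (rule bij_betw_same_card)
qed

lemma card_orbit_eq_iff_support:
  assumes p: "p permutes S" and "finite S" "x \<in> S" "1 \<le> k"
  shows "card (orbit p x) = k \<longleftrightarrow>
    (\<exists>ys. length ys = k - 1 \<and> distinct ys \<and> set ys \<subseteq> S - {x} \<and> support p x = x # ys)"
proof -
  have pp: "permutation p" using p \<open>finite S\<close> permutation_permutes by blast
  define ys where "ys = tl (support p x)"
  have supp: "support p x = x # ys" unfolding ys_def by (rule support_eq_Cons[OF pp])
  have "distinct (x # ys)" using cycle_of_permutation[OF pp, of x] by (simp only: supp)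
  moreover have "set (x # ys) \<subseteq> S"
    using orbit_eq_set_support[OF pp, of x] permutes_orbit_subset[OF p \<open>x \<in> S\<close>]
    by (simp only: supp)
  ultimately have "distinct ys" "set ys \<subseteq> S - {x}" by auto
  moreover have "card (orbit p x) = Suc (length ys)"
    using card_orbit_eq_length_support[OF pp, of x] by (simp only: supp) simp
  ultimately show ?thesis using supp \<open>1 \<le> k\<close> by auto
qed

fun num_even_cycle_perms :: "nat \<Rightarrow> nat" where
  "num_even_cycle_perms 0 = 1"
| "num_even_cycle_perms (Suc 0) = 0"
| "num_even_cycle_perms (Suc (Suc m)) = (Suc m)\<^sup>2 * num_even_cycle_perms m"

definition num_even_cycle_perms_cycle_len :: "nat \<Rightarrow> nat \<Rightarrow> nat" where
  "num_even_cycle_perms_cycle_len m k =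
     (if even k then \<Prod>{m - k + 1..m - 1} * num_even_cycle_perms (m - k) else 0)"

lemma card_even_cycle_perms_on_cycle_len_from_smaller:
  assumes "finite S" "x \<in> S" "1 \<le> k" "k \<le> card S"
    and smaller: "\<And>T. T \<subset> S \<Longrightarrow> card (even_cycle_perms_on T) = num_even_cycle_perms (card T)"
  shows "card {p \<in> even_cycle_perms_on S. card (orbit p x) = k}
           = num_even_cycle_perms_cycle_len (card S) k"
proof (cases "even k")
  case False
  then have empty: "{p \<in> even_cycle_perms_on S. card (orbit p x) = k} = {}"
    using \<open>x \<in> S\<close> by (auto simp: even_cycle_perms_on_def)
  show ?thesis
    unfolding num_even_cycle_perms_cycle_len_def empty using False by simp
next
  case True
  define L where "L = {ys. length ys = k - 1 \<and> distinct ys \<and> set ys \<subseteq> S - {x}}"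
  have "finite L"
    unfolding L_def
    by (rule finite_subset[OF _ finite_lists_length_eq[of "S - {x}" "k - 1"]])
      (use \<open>finite S\<close> in auto)
  have by_support: "{p \<in> even_cycle_perms_on S. card (orbit p x) = k}
          = (\<Union>ys\<in>L. {p \<in> even_cycle_perms_on S. support p (hd (x # ys)) = x # ys})"
    using card_orbit_eq_iff_support[OF _ assms(1-3)] by (fastforce simp: L_def even_cycle_perms_on_def)
  then have "card {p \<in> even_cycle_perms_on S. card (orbit p x) = k}
          = (\<Sum>ys\<in>L. card {p \<in> even_cycle_perms_on S. support p (hd (x # ys)) = x # ys})"
    unfolding by_support using \<open>finite L\<close> finite_even_cycle_perms_on[OF \<open>finite S\<close>]
    by (intro card_UN_disjoint) auto
  also have "\<dots> = (\<Sum>ys\<in>L. num_even_cycle_perms (card S - k))"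
  proof (rule sum.cong[OF refl])
    fix ys assume "ys \<in> L"
    then have ys: "distinct (x # ys)" "set (x # ys) \<subseteq> S" "length (x # ys) = k"
      using \<open>x \<in> S\<close> \<open>1 \<le> k\<close> by (auto simp: L_def)
    have "even (length (x # ys))" using ys(3) True by simp
    then have "card {p \<in> even_cycle_perms_on S. support p (hd (x # ys)) = x # ys}
            = card (even_cycle_perms_on (S - set (x # ys)))"
      using card_even_cycle_perms_on_with_support[OF \<open>finite S\<close> ys(1) _ ys(2)] by simp
    also have "\<dots> = num_even_cycle_perms (card (S - set (x # ys)))"
      by (rule smaller) (use \<open>x \<in> S\<close> in auto)
    also have "card (S - set (x # ys)) = card S - k"
      using card_Diff_subset[OF _ ys(2)] distinct_card[OF ys(1)] ys(3) by (simp add: \<open>finite S\<close>)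
    finally show "card {p \<in> even_cycle_perms_on S. support p (hd (x # ys)) = x # ys}
                    = num_even_cycle_perms (card S - k)" .
  qed
  also have "card L = \<Prod>{card S - k + 1..card S - 1}"
    using card_lists_distinct_length_eq[of "S - {x}" "k - 1"] assms(1-4)
    by (simp add: L_def Suc_diff_le)
  ultimately show ?thesis using True by (simp add: num_even_cycle_perms_cycle_len_def)
qed

lemma num_even_cycle_perms_cycle_len_Suc_Suc:
  assumes "1 \<le> k" "k \<le> m"
  shows "num_even_cycle_perms_cycle_len (Suc (Suc m)) (k + 2)
           = Suc m * m * num_even_cycle_perms_cycle_len m k"
proof -
  obtain m' where m: "m = Suc m'" using assms by (cases m) auto
  have "m - k + 1 \<le> m" using assms by simp
  then have prod: "\<Prod>{m - k + 1..Suc m} = \<Prod>{m - k + 1..m'} * m * Suc m"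
    unfolding m by simp
  have "num_even_cycle_perms_cycle_len (Suc (Suc m)) (k + 2)
          = (if even k then \<Prod>{m - k + 1..Suc m} * num_even_cycle_perms (m - k) else 0)"
    by (simp add: num_even_cycle_perms_cycle_len_def)
  also have "\<dots> = Suc m * m * num_even_cycle_perms_cycle_len m k"
    unfolding prod num_even_cycle_perms_cycle_len_def by (simp add: m algebra_simps)
  finally show ?thesis .
qed

lemma sum_num_even_cycle_perms_cycle_len:
  "1 \<le> m \<Longrightarrow> (\<Sum>k=1..m. num_even_cycle_perms_cycle_len m k) = num_even_cycle_perms m"
proof (induction m rule: num_even_cycle_perms.induct)
  case (3 m)
  let ?f = "num_even_cycle_perms_cycle_len (Suc (Suc m))"
  have IH: "m * (\<Sum>k=1..m. num_even_cycle_perms_cycle_len m k) = m * num_even_cycle_perms m"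
    using "3.IH" by (cases "m = 0") auto
  have "(\<Sum>k=1..Suc (Suc m). ?f k) = ?f 1 + ?f 2 + (\<Sum>k=3..Suc (Suc m). ?f k)"
    using sum.atLeast_Suc_atMost[of 1 "Suc (Suc m)" ?f] sum.atLeast_Suc_atMost[of 2 "Suc (Suc m)" ?f]
    by (simp del: sum.cl_ivl_Suc add: numeral_2_eq_2 numeral_3_eq_3)
  also have "(\<Sum>k=3..Suc (Suc m). ?f k) = (\<Sum>k=1..m. ?f (k + 2))"
    using sum.shift_bounds_cl_nat_ivl[of ?f 1 2 m] by (simp add: numeral_3_eq_3)
  also have "\<dots> = Suc m * m * (\<Sum>k=1..m. num_even_cycle_perms_cycle_len m k)"
    unfolding sum_distrib_left by (rule sum.cong) (use num_even_cycle_perms_cycle_len_Suc_Suc in auto)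
  also have "?f 1 = 0" by (simp add: num_even_cycle_perms_cycle_len_def)
  also have "?f 2 = Suc m * num_even_cycle_perms m" by (simp add: num_even_cycle_perms_cycle_len_def)
  also have "Suc m * m * (\<Sum>k=1..m. num_even_cycle_perms_cycle_len m k)
               = Suc m * m * num_even_cycle_perms m"
    using IH by (metis mult.assoc)
  finally show ?case by (simp add: power2_eq_square algebra_simps)
qed (simp_all add: num_even_cycle_perms_cycle_len_def)

lemma card_even_cycle_perms_on:
  "finite S \<Longrightarrow> card (even_cycle_perms_on S) = num_even_cycle_perms (card S)"
proof (induction S rule: finite_psubset_induct)
  case (psubset S)
  show ?case
  proof (cases "S = {}")
    case True
    then have "even_cycle_perms_on S = {id}" by (auto simp: even_cycle_perms_on_def)
    then show ?thesis using True by simp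
  next
    case False
    then obtain x where "x \<in> S" by blast
    have by_len: "even_cycle_perms_on S
            = (\<Union>k\<in>{1..card S}. {p \<in> even_cycle_perms_on S. card (orbit p x) = k})"
    proof -
      have "1 \<le> card (orbit p x) \<and> card (orbit p x) \<le> card S" if "p permutes S" for p
        using permutes_orbit_subset[OF that \<open>x \<in> S\<close>] orbit_nonempty[of p x] \<open>finite S\<close>
        by (metis One_nat_def Suc_leI card_gt_0_iff card_mono finite_subset)
      then show ?thesis by (auto simp: even_cycle_perms_on_def)
    qed
    have "card (even_cycle_perms_on S)
                 = (\<Sum>k=1..card S. card {p \<in> even_cycle_perms_on S. card (orbit p x) = k})"
      using finite_even_cycle_perms_on[OF \<open>finite S\<close>]
      by (subst by_len, intro card_UN_disjoint) auto
    also have "\<dots> = (\<Sum>k=1..card S. num_even_cycle_perms_cycle_len (card S) k)"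
      using card_even_cycle_perms_on_cycle_len_from_smaller[OF \<open>finite S\<close> \<open>x \<in> S\<close>] psubset.IH
      by (simp add: psubset_imp_subset)
    also have "\<dots> = num_even_cycle_perms (card S)"
      using False \<open>finite S\<close>
      by (intro sum_num_even_cycle_perms_cycle_len) (simp add: Suc_le_eq card_gt_0_iff)
    finally show ?thesis .
  qed
qed

lemma card_even_cycle_perms_on_cycle_len:
  assumes "finite S" "x \<in> S" "1 \<le> k" "k \<le> card S"
  shows "card {p \<in> even_cycle_perms_on S. card (orbit p x) = k}
           = num_even_cycle_perms_cycle_len (card S) k"
proof (rule card_even_cycle_perms_on_cycle_len_from_smaller[OF assms])
  fix T assume "T \<subset> S"
  then show "card (even_cycle_perms_on T) = num_even_cycle_perms (card T)"
    using card_even_cycle_perms_on finite_subset \<open>finite S\<close> by blast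
qed

lemma num_even_cycle_perms_pos: "even m \<Longrightarrow> 0 < num_even_cycle_perms m"
  by (induction m rule: num_even_cycle_perms.induct) auto

lemma num_even_cycle_perms_eq_prod:
  "2 * j \<le> n \<Longrightarrow>
     num_even_cycle_perms n = (\<Prod>i<j. n - 1 - 2 * i)\<^sup>2 * num_even_cycle_perms (n - 2 * j)"
proof (induction j)
  case (Suc j)
  then have "n - 2 * j = Suc (Suc (n - 2 * Suc j))" "n - 1 - 2 * j = Suc (n - 2 * Suc j)" by auto
  then have "num_even_cycle_perms (n - 2 * j)
               = (n - 1 - 2 * j)\<^sup>2 * num_even_cycle_perms (n - 2 * Suc j)"
    by simp
  then show ?case using Suc by (simp add: power_mult_distrib)
qed simp

lemma mult_prod_atLeastAtMost_pred:
  fixes n k :: nat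
  assumes "1 \<le> k" "k \<le> n"
  shows "n * \<Prod>{n - k + 1..n - 1} = \<Prod>{n - k + 1..n}"
proof -
  obtain n' where n: "n = Suc n'" using assms by (cases n) auto
  show ?thesis using assms unfolding n by auto
qed

lemma prod_atLeastAtMost_pairs:
  fixes n j :: nat
  shows "2 * j \<le> n \<Longrightarrow> \<Prod>{n - 2 * j + 1..n} = (\<Prod>i<j. (n - 2 * i) * (n - 1 - 2 * i))"
proof (induction j)
  case (Suc j)
  have "{n - 2 * Suc j + 1..n} = insert (n - 1 - 2 * j) (insert (n - 2 * j) {n - 2 * j + 1..n})"
    using Suc.prems by auto
  moreover have "n - 1 - 2 * j \<notin> insert (n - 2 * j) {n - 2 * j + 1..n}"
    "n - 2 * j \<notin> {n - 2 * j + 1..n}"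
    using Suc.prems by auto
  ultimately have "\<Prod>{n - 2 * Suc j + 1..n}
                    = (n - 1 - 2 * j) * ((n - 2 * j) * \<Prod>{n - 2 * j + 1..n})"
    by simp
  then show ?case using Suc by simp
qed simp

lemma num_even_cycle_perms_cycle_len_ratio:
  assumes "even n" "1 \<le> j" "2 * j \<le> n"
  shows "real (n * num_even_cycle_perms_cycle_len n (2 * j)) / real (num_even_cycle_perms n)
           = (\<Prod>i<j. real (n - 2 * i)) / (\<Prod>i<j. real (n - 1 - 2 * i))"
proof -
  let ?P = "\<Prod>i<j. n - 2 * i" and ?Q = "\<Prod>i<j. n - 1 - 2 * i"
  let ?N = "num_even_cycle_perms (n - 2 * j)"
  have "n * num_even_cycle_perms_cycle_len n (2 * j) = \<Prod>{n - 2 * j + 1..n} * ?N"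
    using mult_prod_atLeastAtMost_pred[of "2 * j" n] assms
    by (simp add: num_even_cycle_perms_cycle_len_def)
  also have "\<dots> = ?P * ?Q * ?N"
    using prod_atLeastAtMost_pairs[OF assms(3)] by (simp add: prod.distrib)
  finally have num: "n * num_even_cycle_perms_cycle_len n (2 * j) = ?P * ?Q * ?N" .
  have "?N > 0" using num_even_cycle_perms_pos assms(1) by simp
  moreover have "?Q > 0" using assms by (simp add: prod_pos)
  ultimately show ?thesis
    unfolding num num_even_cycle_perms_eq_prod[OF assms(3)]
    by (simp add: power2_eq_square)
qed

theorem proposition3p1:
  fixes n k :: nat
  assumes "n > 0" and "even n" and "1 \<le> k" and "k \<le> n"
  shows "EY_even n k =
           (if even k
            then (\<Prod>i<k div 2. real (n - 2 * i)) / (\<Prod>i<k div 2. real (n - 1 - 2 * i))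
            else 0)"
proof -
  let ?E = "even_cycle_perms_on {1..n}"
  have "(\<Sum>p\<in>?E. Y n k p) = num_even_cycle_perms_cycle_len n k * card {1..n}"
    unfolding Y_def cycle_len_def
  proof (rule sum_multicount)
    show "\<forall>x\<in>{1..n}. card {p \<in> ?E. card (orbit p x) = k} = num_even_cycle_perms_cycle_len n k"
      using card_even_cycle_perms_on_cycle_len[of "{1..n}" _ k] assms by simp
  qed (simp_all add: finite_even_cycle_perms_on)
  then have "EY_even n k = real (n * num_even_cycle_perms_cycle_len n k) / real (num_even_cycle_perms n)"
    unfolding EY_even_def even_cycle_perms_eq_on card_even_cycle_perms_on[OF finite_atLeastAtMost]
    by (simp flip: of_nat_sum)
  then show ?thesis
    using num_even_cycle_perms_cycle_len_ratio[OF \<open>even n\<close>, of "k div 2"] assms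
    by (auto simp: num_even_cycle_perms_cycle_len_def)
qed

end
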